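(* Let $(S,\cdot)$ be a discrete semigroup and let $\mathcal{F}$ be a filter on $S$ such that $\overline{\mathcal{F}}=\bigcap_{F\in\mathcal{F}}\overline{F}\subseteq\beta S$ is a (closed) subsemigroup of $\beta S$. Let $B\subseteq S$. Then $B$ is $\mathcal{F}$-central if and only if there exist a dynamical system $(X,\langle T_s\rangle_{s\in S})$, points $x,y\in X$ and a neighbourhood $U$ of $y$ such that $x$ and $y$ are $\mathcal{F}$-proximal, $y$ is $\mathcal{F}$-uniformly recurrent, and $B=\{s\in S: T_s(x)\in U\}$.
   Context: $\beta S$ is the Stone–Čech compactification of the discrete semigroup $S$ (the space of ultrafilters on $S$), with the operation extended so that $(\beta S,\cdot)$ is a compact right topological semigroup; $A\in p\cdot q$ iff $\{x\in S: x^{-1}A\in q\}\in p$, where $x^{-1}A=\{y\in S: xy\in A\}$. For a filter $\mathcal{F}$ on $S$, $\overline{\mathcal{F}}=\bigcap_{F\in\mathcal{F}}\overline{F}$ is the set of ultrafilters containing $\mathcal{F}$. For a compact Hausdorff right topological semigroup $T$, $K(T)$ denotes its smallest two-sided ideal. A set $C\subseteq S$ is $\mathcal{F}$-central if there is an idempotent $p\in K(\overline{\mathcal{F}})$ with $C\in p$. A dynamical system $(X,\langle T_s\rangle_{s\in S})$ consists of a compact (Hausdorff) space $X$ and continuous maps $T_s:X\to X$ with $T_s\circ T_t=T_{st}$ for all $s,t\in S$. A set $A\subseteq S$ is $\mathcal{F}$-syndetic if for every $F\in\mathcal{F}$ there is a finite $G\subseteq F$ with $G^{-1}A=\bigcup_{t\in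 G}t^{-1}A\in\mathcal{F}$. A point $x\in X$ is $\mathcal{F}$-uniformly recurrent if for every neighbourhood $U$ of $x$, $\{s\in S: T_s(x)\in U\}$ is $\mathcal{F}$-syndetic. Points $x,y\in X$ are $\mathcal{F}$-proximal if for every neighbourhood $U$ of the diagonal in $X\times X$ and every $F\in\mathcal{F}$ there is $s\in F$ with $(T_s(x),T_s(y))\in U$. *)

theory Defs
  imports "HOL-Analysis.Analysis"
begin

text \<open>The discrete semigroup S is the whole type 's (class semigroup_mult).
  Ultrafilters (points of beta S) are represented as sets of subsets of S.\<close>

definition is_ultrafilter :: "'s set set \<Rightarrow> bool" where
  "is_ultrafilter p \<longleftrightarrow> UNIV \<in> p \<and> {} \<notin> p
     \<and> (\<forall>A B. A \<in> p \<and> B \<in> p \<longrightarrow> A \<inter> B \<in> p)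
     \<and> (\<forall>A B. A \<in> p \<and> A \<subseteq> B \<longrightarrow> B \<in> p)
     \<and> (\<forall>A. A \<in> p \<or> - A \<in> p)"

definition betaS :: "'s set set set" where
  "betaS = {p. is_ultrafilter p}"

definition is_filter_on :: "'s set set \<Rightarrow> bool" where
  "is_filter_on F \<longleftrightarrow> UNIV \<in> F \<and> {} \<notin> F
     \<and> (\<forall>A B. A \<in> F \<and> B \<in> F \<longrightarrow> A \<inter> B \<in> F)
     \<and> (\<forall>A B. A \<in> F \<and> A \<subseteq> B \<longrightarrow> B \<in> F)"

text \<open>Closure of F in beta S: the ultrafilters containing F.\<close>
definition Fbar :: "'s set set \<Rightarrow> 's set set set" where
  "Fbar F = {p \<in> betaS. F \<subseteq> p}"

definition umult :: "'s::semigroup_mult set set \<Rightarrow> 's set set \<Rightarrow> 's set set" where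
  "umult p q = {A. {x. {y. x * y \<in> A} \<in> q} \<in> p}"

definition subsemigroup_beta :: "'s::semigroup_mult set set set \<Rightarrow> bool" where
  "subsemigroup_beta T \<longleftrightarrow> T \<subseteq> betaS \<and> (\<forall>p\<in>T. \<forall>q\<in>T. umult p q \<in> T)"

definition ideal_beta :: "'s::semigroup_mult set set set \<Rightarrow> 's set set set \<Rightarrow> bool" where
  "ideal_beta T I \<longleftrightarrow> I \<noteq> {} \<and> I \<subseteq> T
     \<and> (\<forall>p\<in>T. \<forall>q\<in>I. umult p q \<in> I \<and> umult q p \<in> I)"

definition K_beta :: "'s::semigroup_mult set set set \<Rightarrow> 's set set set" where
  "K_beta T = \<Inter> {I. ideal_beta T I}"

definition F_central :: "'s::semigroup_mult set set \<Rightarrow> 's set \<Rightarrow> bool" where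
  "F_central F C \<longleftrightarrow> (\<exists>p \<in> K_beta (Fbar F). umult p p = p \<and> C \<in> p)"

definition dyn_system :: "'x topology \<Rightarrow> ('s::semigroup_mult \<Rightarrow> 'x \<Rightarrow> 'x) \<Rightarrow> bool" where
  "dyn_system X T \<longleftrightarrow> compact_space X \<and> Hausdorff_space X
     \<and> (\<forall>s. continuous_map X X (T s))
     \<and> (\<forall>s t. \<forall>x \<in> topspace X. T s (T t x) = T (s * t) x)"

definition nbhd :: "'x topology \<Rightarrow> 'x set \<Rightarrow> 'x set \<Rightarrow> bool" where
  "nbhd X U A \<longleftrightarrow> U \<subseteq> topspace X \<and> (\<exists>V. openin X V \<and> A \<subseteq> V \<and> V \<subseteq> U)"

definition F_syndetic :: "'s::semigroup_mult set set \<Rightarrow> 's set \<Rightarrow> bool" where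
  "F_syndetic F A \<longleftrightarrow> (\<forall>G \<in> F. \<exists>H. finite H \<and> H \<subseteq> G \<and> (\<Union>t\<in>H. {y. t * y \<in> A}) \<in> F)"

definition F_unif_rec :: "'s::semigroup_mult set set \<Rightarrow> 'x topology \<Rightarrow> ('s \<Rightarrow> 'x \<Rightarrow> 'x) \<Rightarrow> 'x \<Rightarrow> bool" where
  "F_unif_rec F X T x \<longleftrightarrow> (\<forall>U. nbhd X U {x} \<longrightarrow> F_syndetic F {s. T s x \<in> U})"

definition F_proximal :: "'s::semigroup_mult set set \<Rightarrow> 'x topology \<Rightarrow> ('s \<Rightarrow> 'x \<Rightarrow> 'x) \<Rightarrow> 'x \<Rightarrow> 'x \<Rightarrow> bool" where
  "F_proximal F X T x y \<longleftrightarrow>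
     (\<forall>W. nbhd (prod_topology X X) W {(z, z) | z. z \<in> topspace X} \<longrightarrow>
        (\<forall>G \<in> F. \<exists>s \<in> G. (T s x, T s y) \<in> W))"

end

(*
  An ultrafilter p on S acts on a compact dynamical system by T_p x = p-lim T_s x; this is
  continuous in p, and T_p (T_q x) = T_(p q) x.  In these terms x, y are F-proximal iff
  T_r x = T_r y for some r in Fbar F, and y is F-uniformly recurrent if T_p y = y for some p in
  K(Fbar F); conversely, uniform recurrence puts into every minimal left ideal L an element q
  with T_q y = y, hence (Ellis' lemma) an idempotent u with T_u y = y.  Taking L inside
  (Fbar F) r for a proximality witness r gives T_u x = T_u y = y, so {s. T_s x in U} lies in
  the minimal idempotent u.  Conversely, a minimal idempotent p containing B, acting on the
  shift space {0,1}^(S + identity) at the indicator x of B, fixes y = T_p x, which is then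
  proximal to x and uniformly recurrent.
*)

theory Submission
  imports Defs
begin

section \<open>Ultrafilters\<close>

lemma ultrafilter_UNIV: "is_ultrafilter p \<Longrightarrow> UNIV \<in> p"
  by (simp add: is_ultrafilter_def)

lemma ultrafilter_Int: "is_ultrafilter p \<Longrightarrow> A \<in> p \<Longrightarrow> B \<in> p \<Longrightarrow> A \<inter> B \<in> p"
  by (simp add: is_ultrafilter_def)

lemma ultrafilter_mono: "is_ultrafilter p \<Longrightarrow> A \<in> p \<Longrightarrow> A \<subseteq> B \<Longrightarrow> B \<in> p"
  unfolding is_ultrafilter_def by blast

lemma ultrafilter_Int_iff: "is_ultrafilter p \<Longrightarrow> A \<inter> B \<in> p \<longleftrightarrow> A \<in> p \<and> B \<in> p"
  using ultrafilter_Int ultrafilter_mono by blast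

lemma ultrafilter_Int_nonempty: "is_ultrafilter p \<Longrightarrow> A \<in> p \<Longrightarrow> B \<in> p \<Longrightarrow> A \<inter> B \<noteq> {}"
  unfolding is_ultrafilter_def by metis

lemma ultrafilter_Compl_iff: "is_ultrafilter p \<Longrightarrow> - A \<in> p \<longleftrightarrow> A \<notin> p"
  using ultrafilter_Int_nonempty unfolding is_ultrafilter_def by blast

lemma ultrafilter_finite_UN:
  assumes p: "is_ultrafilter p" and "finite H" and "(\<Union>t\<in>H. f t) \<in> p"
  shows "\<exists>t\<in>H. f t \<in> p"
  using assms(2,3)
proof (induction H rule: finite_induct)
  case empty
  then show ?case using p unfolding is_ultrafilter_def by simp
next
  case (insert t H)
  show ?case
  proof (cases "f t \<in> p")
    case False
    then have "(\<Union>t\<in>insert t H. f t) \<inter> - f t \<in> p"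
      using insert.prems ultrafilter_Compl_iff[OF p] ultrafilter_Int[OF p] by blast
    then have "(\<Union>t\<in>H. f t) \<in> p" by (rule ultrafilter_mono[OF p]) auto
    then show ?thesis using insert.IH by blast
  qed simp
qed

lemma principal_ultrafilter: "is_ultrafilter {A. a \<in> A}"
  unfolding is_ultrafilter_def by auto

lemma ultrafilter_preimage_hom:
  assumes p: "is_ultrafilter p" and UNIV: "h UNIV = UNIV"
    and Int: "\<And>A B. h (A \<inter> B) = h A \<inter> h B" and Compl: "\<And>A. h (- A) = - h A"
  shows "is_ultrafilter {A. h A \<in> p}"
  unfolding is_ultrafilter_def mem_Collect_eq
proof (intro conjI allI impI)
  show "h UNIV \<in> p" using ultrafilter_UNIV[OF p] UNIV by simp
  have "h {} = {}" using UNIV Compl[of UNIV] by simp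
  then show "h {} \<notin> p" using p by (simp add: is_ultrafilter_def)
  fix A B
  show "h (A \<inter> B) \<in> p" if "h A \<in> p \<and> h B \<in> p" using that ultrafilter_Int[OF p] by (simp add: Int)
  show "h B \<in> p" if "h A \<in> p \<and> A \<subseteq> B"
  proof -
    have "h A \<subseteq> h B" using that Int[of A B] by (metis Int_absorb2 le_inf_iff order_refl)
    then show ?thesis using that ultrafilter_mono[OF p] by blast
  qed
  show "h A \<in> p \<or> h (- A) \<in> p" using ultrafilter_Compl_iff[OF p] by (simp add: Compl)
qed

section \<open>The compact space \<open>\<beta>S\<close>\<close>

definition membership_topology :: "'a set set topology" where
  "membership_topology =
     pullback_topology UNIV (\<lambda>\<A> A. A \<in> \<A>) (product_topology (\<lambda>_. discrete_topology UNIV) UNIV)"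

lemma topspace_membership_topology [simp]: "topspace membership_topology = UNIV"
  by (simp add: membership_topology_def topspace_pullback_topology)

lemma continuous_map_membership:
  "continuous_map membership_topology (discrete_topology UNIV) (\<lambda>\<A>. A \<in> \<A>)"
proof -
  have "continuous_map membership_topology (discrete_topology UNIV) ((\<lambda>f. f A) \<circ> (\<lambda>\<A> A. A \<in> \<A>))"
    unfolding membership_topology_def
    by (intro continuous_map_pullback continuous_map_product_projection) simp
  then show ?thesis by (simp add: o_def)
qed

lemma continuous_map_into_membership_topology_iff:
  "continuous_map Y membership_topology g \<longleftrightarrow>
     (\<forall>A. continuous_map Y (discrete_topology UNIV) (\<lambda>y. A \<in> g y))"
proof (intro iffI allI)
  fix A assume "continuous_map Y membership_topology g"
  from continuous_map_compose[OF this continuous_map_membership]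
  show "continuous_map Y (discrete_topology UNIV) (\<lambda>y. A \<in> g y)" by (simp add: o_def)
next
  assume "\<forall>A. continuous_map Y (discrete_topology UNIV) (\<lambda>y. A \<in> g y)"
  then show "continuous_map Y membership_topology g"
    unfolding membership_topology_def
    by (intro continuous_map_pullback') (simp_all add: continuous_map_componentwise_UNIV o_def)
qed

lemma membership_topology_homeomorphic_product:
  "(membership_topology :: 'a set set topology)
     homeomorphic_space product_topology (\<lambda>_::'a set. discrete_topology (UNIV :: bool set)) UNIV"
  unfolding homeomorphic_space_def homeomorphic_maps_def
proof (intro exI conjI)
  show "continuous_map membership_topology (product_topology (\<lambda>_. discrete_topology UNIV) UNIV)
          (\<lambda>\<A> A. A \<in> \<A>)"
    by (simp add: continuous_map_componentwise_UNIV continuous_map_membership)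
  show "continuous_map (product_topology (\<lambda>_. discrete_topology UNIV) UNIV)
          membership_topology Collect"
    by (auto simp: continuous_map_into_membership_topology_iff
        intro: continuous_map_product_projection)
qed auto

lemma compact_space_membership_topology: "compact_space membership_topology"
  using homeomorphic_compact_space[OF membership_topology_homeomorphic_product]
  by (simp add: compact_space_product_topology compact_space_discrete_topology)

lemma Hausdorff_space_membership_topology: "Hausdorff_space membership_topology"
  using homeomorphic_Hausdorff_space[OF membership_topology_homeomorphic_product]
  by (simp add: Hausdorff_space_product_topology)

lemma membership_clopen:
  "openin membership_topology {\<A>. P (A \<in> \<A>)}" "closedin membership_topology {\<A>. P (A \<in> \<A>)}"
  using openin_continuous_map_preimage[OF continuous_map_membership, of "Collect P" A]
    closedin_continuous_map_preimage[OF continuous_map_membership, of "Collect P" A]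
  by simp_all

lemma betaS_eq_Inter:
  "betaS = {\<A>. UNIV \<in> \<A>} \<inter> {\<A>. {} \<notin> \<A>}
     \<inter> (\<Inter>A. \<Inter>B. {\<A>. A \<notin> \<A>} \<union> {\<A>. B \<notin> \<A>} \<union> {\<A>. A \<inter> B \<in> \<A>})
     \<inter> (\<Inter>A. \<Inter>B. {\<A>. A \<notin> \<A>} \<union> {\<A>. A \<union> B \<in> \<A>})
     \<inter> (\<Inter>A. {\<A>. A \<in> \<A>} \<union> {\<A>. - A \<in> \<A>})"
proof -
  have "(\<forall>A B. A \<in> \<A> \<and> A \<subseteq> B \<longrightarrow> B \<in> \<A>) \<longleftrightarrow> (\<forall>A B. A \<in> \<A> \<longrightarrow> A \<union> B \<in> \<A>)"
    for \<A> :: "'a set set"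
    by (metis Un_upper1 sup.absorb2)
  then show ?thesis unfolding betaS_def is_ultrafilter_def by auto
qed

lemma closedin_betaS: "closedin membership_topology betaS"
  unfolding betaS_eq_Inter by (intro closedin_Int closedin_Un closedin_INT membership_clopen) auto

definition beta_topology :: "'a set set topology" where
  "beta_topology = subtopology membership_topology betaS"

lemma topspace_beta_topology [simp]: "topspace beta_topology = betaS"
  by (simp add: beta_topology_def)

lemma compact_space_beta_topology: "compact_space beta_topology"
  unfolding beta_topology_def
  by (intro compact_space_subtopology closedin_compact_space
      compact_space_membership_topology closedin_betaS)

lemma Hausdorff_space_beta_topology: "Hausdorff_space beta_topology"
  unfolding beta_topology_def by (intro Hausdorff_space_subtopology Hausdorff_space_membership_topology)

lemma beta_basic_clopen:
  "openin beta_topology {q \<in> betaS. A \<in> q}" "closedin beta_topology {q \<in> betaS. A \<in> q}"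
  unfolding beta_topology_def using membership_clopen[of "\<lambda>b. b" A]
  by (auto simp: openin_subtopology closedin_subtopology)

lemma continuous_map_beta_membership:
  "continuous_map beta_topology (discrete_topology UNIV) (\<lambda>q. A \<in> q)"
  unfolding beta_topology_def by (rule continuous_map_from_subtopology[OF continuous_map_membership])

lemma continuous_map_into_beta_topology:
  assumes "g \<in> topspace Y \<rightarrow> betaS"
    and "\<And>A. continuous_map Y (discrete_topology UNIV) (\<lambda>y. A \<in> g y)"
  shows "continuous_map Y beta_topology g"
  using assms unfolding beta_topology_def
  by (simp add: continuous_map_in_subtopology continuous_map_into_membership_topology_iff)

lemma ex_ultrafilter_superset:
  assumes Int: "\<And>A B. A \<in> \<G> \<Longrightarrow> B \<in> \<G> \<Longrightarrow> A \<inter> B \<in> \<G>" and "{} \<notin> \<G>"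
  shows "\<exists>q. is_ultrafilter q \<and> \<G> \<subseteq> q"
proof (cases "\<G> = {}")
  case True
  then show ?thesis by (metis empty_subsetI principal_ultrafilter)
next
  case False
  \<comment> \<open>compactness of \<open>\<beta>S\<close> replaces Zorn's lemma; principal ultrafilters give the
    finite intersection property\<close>
  let ?C = "\<lambda>A. {q \<in> betaS. A \<in> q}"
  have "\<Inter>\<F> \<noteq> {}" if \<F>: "finite \<F>" "\<F> \<subseteq> ?C ` \<G>" for \<F>
  proof -
    obtain \<G>' where \<G>': "finite \<G>'" "\<G>' \<subseteq> \<G>" "\<F> = ?C ` \<G>'"
      using \<F> by (meson finite_subset_image)
    show ?thesis
    proof (cases "\<G>' = {}")
      case False
      have "\<Inter>\<G>' \<in> \<G>"
        using \<G>'(1) False \<G>'(2) by (induction \<G>' rule: finite_ne_induct) (simp_all add: Int)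
      then obtain a where "a \<in> \<Inter>\<G>'" using \<open>{} \<notin> \<G>\<close> by (metis ex_in_conv)
      then have "{A. a \<in> A} \<in> \<Inter>\<F>" using \<G>'(3) principal_ultrafilter by (auto simp: betaS_def)
      then show ?thesis by blast
    qed (simp add: \<G>'(3))
  qed
  moreover have "\<forall>C\<in>?C ` \<G>. closedin beta_topology C" using beta_basic_clopen(2) by blast
  ultimately have "\<Inter>(?C ` \<G>) \<noteq> {}"
    using compact_space_beta_topology[unfolded compact_space_fip, rule_format, of "?C ` \<G>"] by blast
  then obtain q where "\<forall>A\<in>\<G>. q \<in> betaS \<and> A \<in> q" by blast
  then show ?thesis using False by (auto simp: betaS_def)
qed

section \<open>Closed subsemigroups of \<open>\<beta>S\<close>\<close>

lemma umult_assoc: "umult (umult p q) r = umult p (umult q (r :: 's::semigroup_mult set set))"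
  unfolding umult_def by (simp add: mult.assoc)

lemma ultrafilter_umult:
  assumes p: "is_ultrafilter p" and q: "is_ultrafilter q"
  shows "is_ultrafilter (umult p (q :: 's::semigroup_mult set set))"
  unfolding umult_def
proof (rule ultrafilter_preimage_hom[OF p])
  show "{x. {y. x * y \<in> UNIV} \<in> q} = UNIV" using ultrafilter_UNIV[OF q] by simp
  show "{x. {y. x * y \<in> A \<inter> B} \<in> q} = {x. {y. x * y \<in> A} \<in> q} \<inter> {x. {y. x * y \<in> B} \<in> q}" for A B
    by (simp add: Collect_conj_eq ultrafilter_Int_iff[OF q])
  show "{x. {y. x * y \<in> - A} \<in> q} = - {x. {y. x * y \<in> A} \<in> q}" for A
    by (simp add: Collect_neg_eq ultrafilter_Compl_iff[OF q])
qed

lemma continuous_map_umult_right: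
  assumes "is_ultrafilter q"
  shows "continuous_map beta_topology beta_topology (\<lambda>p. umult p (q :: 's::semigroup_mult set set))"
proof (rule continuous_map_into_beta_topology)
  show "(\<lambda>p. umult p q) \<in> topspace beta_topology \<rightarrow> betaS"
    using ultrafilter_umult[OF _ assms] by (auto simp: betaS_def)
  show "continuous_map beta_topology (discrete_topology UNIV) (\<lambda>p. A \<in> umult p q)" for A
    unfolding umult_def using continuous_map_beta_membership by simp
qed

lemma closedin_image_umult_right:
  assumes "closedin beta_topology C" and "is_ultrafilter q"
  shows "closedin beta_topology ((\<lambda>p. umult p (q :: 's::semigroup_mult set set)) ` C)"
proof -
  have "compactin beta_topology C"
    using closedin_compact_space[OF compact_space_beta_topology assms(1)] .
  then have "compactin beta_topology ((\<lambda>p. umult p q) ` C)"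
    using image_compactin continuous_map_umult_right[OF assms(2)] by blast
  then show ?thesis using compactin_imp_closedin[OF Hausdorff_space_beta_topology] by blast
qed

lemma compact_space_ex_minimal_closed:
  assumes Y: "compact_space Y" and "\<A> \<noteq> {}"
    and closed: "\<And>C. C \<in> \<A> \<Longrightarrow> closedin Y C" and nonempty: "\<And>C. C \<in> \<A> \<Longrightarrow> C \<noteq> {}"
    and chain: "\<And>\<C>. \<C> \<noteq> {} \<Longrightarrow> subset.chain \<A> \<C> \<Longrightarrow> \<Inter>\<C> \<noteq> {} \<Longrightarrow> \<Inter>\<C> \<in> \<A>"
  shows "\<exists>M\<in>\<A>. \<forall>C\<in>\<A>. C \<subseteq> M \<longrightarrow> C = M"
proof -
  have "\<exists>N\<in>uminus ` \<A>. \<forall>D\<in>uminus ` \<A>. N \<subseteq> D \<longrightarrow> D = N"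
  proof (rule subset_Zorn_nonempty)
    fix \<D> assume "\<D> \<noteq> {}" and \<D>: "subset.chain (uminus ` \<A>) \<D>"
    define \<C> where "\<C> = uminus ` \<D>"
    have "\<C> \<subseteq> uminus ` uminus ` \<A>"
      unfolding \<C>_def using \<D> by (simp add: subset_chain_def image_mono)
    then have \<C>\<A>: "\<C> \<subseteq> \<A>" by (simp add: image_image)
    have "\<forall>C\<in>\<C>. \<forall>D\<in>\<C>. C \<subseteq> D \<or> D \<subseteq> C"
      using \<D> unfolding \<C>_def subset_chain_def by blast
    with \<C>\<A> have \<C>: "subset.chain \<A> \<C>" by (simp add: subset_chain_def)
    have "\<Inter>\<F> \<noteq> {}" if \<F>: "finite \<F>" "\<F> \<subseteq> \<C>" for \<F>
    proof (cases "\<F> = {}")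
      case False
      have "subset.chain \<A> \<F>" using \<C> \<F>(2) by (simp add: subset_chain_def subset_iff)
      then have "\<Inter>\<F> \<in> \<F>" by (rule Inter_in_chain[OF \<F>(1) False])
      then have "\<Inter>\<F> \<in> \<A>" using \<C>\<A> \<F>(2) by blast
      then show ?thesis by (rule nonempty)
    qed simp
    moreover have "\<forall>C\<in>\<C>. closedin Y C" using \<C>\<A> closed by auto
    ultimately have "\<Inter>\<C> \<noteq> {}"
      using Y unfolding compact_space_fip by (elim allE impE) (intro conjI; blast)
    moreover have "\<C> \<noteq> {}" unfolding \<C>_def using \<open>\<D> \<noteq> {}\<close> by simp
    ultimately have "\<Inter>\<C> \<in> \<A>" using chain \<C> by simp
    moreover have "\<Union>\<D> = - \<Inter>\<C>" unfolding \<C>_def by auto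
    ultimately show "\<Union>\<D> \<in> uminus ` \<A>" by simp
  qed (use \<open>\<A> \<noteq> {}\<close> in blast)
  then obtain N where N: "N \<in> uminus ` \<A>" and max: "\<forall>D\<in>uminus ` \<A>. N \<subseteq> D \<longrightarrow> D = N" ..
  obtain M where M: "N = - M" "M \<in> \<A>" using N by (rule imageE)
  have "C = M" if "C \<in> \<A>" "C \<subseteq> M" for C
    using max M that by (metis Compl_subset_Compl_iff compl_eq_compl_iff image_eqI)
  then show ?thesis using M(2) by blast
qed

locale closed_subsemigroup =
  fixes S :: "'s::semigroup_mult set set set"
  assumes closedin_S: "closedin beta_topology S" and S_nonempty: "S \<noteq> {}"
    and subsemigroup_S: "subsemigroup_beta S"

lemma closed_subsemigroup_iff:
  "closed_subsemigroup S \<longleftrightarrow>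
     closedin beta_topology S \<and> S \<noteq> {} \<and> (\<forall>p\<in>S. \<forall>q\<in>S. umult p q \<in> S)"
  using closedin_subset[of beta_topology S]
  by (auto simp: closed_subsemigroup_def subsemigroup_beta_def)

context closed_subsemigroup
begin

lemma ultrafilter_of_mem: "p \<in> S \<Longrightarrow> is_ultrafilter p"
  using subsemigroup_S by (auto simp: subsemigroup_beta_def betaS_def)

lemma umult_closed: "p \<in> S \<Longrightarrow> q \<in> S \<Longrightarrow> umult p q \<in> S"
  using subsemigroup_S by (simp add: subsemigroup_beta_def)

lemma ex_minimal_closed_subsemigroup:
  "\<exists>M\<subseteq>S. closed_subsemigroup M \<and> (\<forall>D. closed_subsemigroup D \<longrightarrow> D \<subseteq> M \<longrightarrow> D = M)"
proof -
  let ?\<A> = "{D. closed_subsemigroup D \<and> D \<subseteq> S}"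
  have "\<exists>M\<in>?\<A>. \<forall>D\<in>?\<A>. D \<subseteq> M \<longrightarrow> D = M"
  proof (rule compact_space_ex_minimal_closed[OF compact_space_beta_topology])
    show "?\<A> \<noteq> {}" using closed_subsemigroup_axioms by blast
  next
    fix \<C> assume "\<C> \<noteq> {}" "subset.chain ?\<A> \<C>" "\<Inter>\<C> \<noteq> {}"
    then have \<C>: "\<C> \<subseteq> ?\<A>" "\<C> \<noteq> {}" by (simp_all add: subset_chain_def)
    then obtain C where "C \<in> \<C>" by blast
    then have "\<Inter>\<C> \<subseteq> S" using Inter_lower \<C>(1) by blast
    moreover have "closedin beta_topology (\<Inter>\<C>)" "\<And>p q. p \<in> \<Inter>\<C> \<Longrightarrow> q \<in> \<Inter>\<C> \<Longrightarrow> umult p q \<in> \<Inter>\<C>"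
      using \<C> by (auto simp: closed_subsemigroup_iff intro!: closedin_Inter)
    ultimately show "\<Inter>\<C> \<in> ?\<A>" using \<open>\<Inter>\<C> \<noteq> {}\<close> by (simp add: closed_subsemigroup_iff)
  qed (simp_all add: closed_subsemigroup_iff)
  then obtain M where M: "closed_subsemigroup M" "M \<subseteq> S" and min: "\<forall>D\<in>?\<A>. D \<subseteq> M \<longrightarrow> D = M"
    by blast
  have "D = M" if "closed_subsemigroup D" "D \<subseteq> M" for D using min that M(2) by blast
  then show ?thesis using M by blast
qed

lemma ex_idempotent: "\<exists>u\<in>S. umult u u = u"
proof -
  obtain M where M: "M \<subseteq> S" "closed_subsemigroup M"
    and min: "\<And>D. closed_subsemigroup D \<Longrightarrow> D \<subseteq> M \<Longrightarrow> D = M"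
    using ex_minimal_closed_subsemigroup by blast
  interpret M: closed_subsemigroup M by (rule M(2))
  obtain u where u: "u \<in> M" using M.S_nonempty by blast
  have u_uf: "is_ultrafilter u" by (rule M.ultrafilter_of_mem[OF u])
  have "(\<lambda>p. umult p u) ` M = M"
  proof (rule min)
    have "umult (umult p u) (umult q u) \<in> (\<lambda>p. umult p u) ` M" if "p \<in> M" "q \<in> M" for p q
      using M.umult_closed u that by (simp add: umult_assoc[symmetric])
    then show "closed_subsemigroup ((\<lambda>p. umult p u) ` M)"
      unfolding closed_subsemigroup_iff
      using closedin_image_umult_right[OF M.closedin_S u_uf] M.S_nonempty by blast
    show "(\<lambda>p. umult p u) ` M \<subseteq> M" using M.umult_closed u by auto
  qed
  then obtain v where v: "v \<in> M" "umult v u = u" using u by (metis imageE)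
  have "{v \<in> M. umult v u = u} = M"
  proof (rule min)
    have "closedin beta_topology {v \<in> M. umult v u \<in> {u}}"
      using closedin_continuous_map_preimage_gen[OF continuous_map_umult_right[OF u_uf] M.closedin_S
          closedin_Hausdorff_singleton[OF Hausdorff_space_beta_topology]] u_uf
      by (simp add: betaS_def)
    moreover have "umult p q \<in> {v \<in> M. umult v u = u}"
      if "p \<in> M" "umult p u = u" "q \<in> M" "umult q u = u" for p q
      using M.umult_closed that by (simp add: umult_assoc)
    ultimately show "closed_subsemigroup {v \<in> M. umult v u = u}"
      unfolding closed_subsemigroup_iff using v by auto
  qed auto
  then show ?thesis using u M(1) by auto
qed

definition left_ideal :: "'s set set set \<Rightarrow> bool" where
  "left_ideal L \<longleftrightarrow> L \<noteq> {} \<and> L \<subseteq> S \<and> (\<forall>p\<in>S. \<forall>l\<in>L. umult p l \<in> L)"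

definition min_left_ideal :: "'s set set set \<Rightarrow> bool" where
  "min_left_ideal L \<longleftrightarrow> left_ideal L \<and> (\<forall>J. left_ideal J \<longrightarrow> J \<subseteq> L \<longrightarrow> J = L)"

lemma min_left_idealD:
  assumes "min_left_ideal L"
  shows "L \<noteq> {}" "L \<subseteq> S" "\<And>p l. p \<in> S \<Longrightarrow> l \<in> L \<Longrightarrow> umult p l \<in> L"
  using assms by (auto simp: min_left_ideal_def left_ideal_def)

lemma left_ideal_image_umult_right: "q \<in> S \<Longrightarrow> left_ideal ((\<lambda>p. umult p q) ` S)"
  unfolding left_ideal_def using S_nonempty umult_closed by (auto simp: umult_assoc[symmetric])

lemma image_umult_right_subset: "left_ideal L \<Longrightarrow> l \<in> L \<Longrightarrow> (\<lambda>p. umult p l) ` S \<subseteq> L"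
  unfolding left_ideal_def by blast

lemma ex_min_left_ideal:
  assumes L: "left_ideal L"
  shows "\<exists>M. min_left_ideal M \<and> M \<subseteq> L"
proof -
  define \<A> where "\<A> = {C. closedin beta_topology C \<and> left_ideal C \<and> C \<subseteq> L}"
  have image_in_\<A>: "(\<lambda>p. umult p l) ` S \<in> \<A>" if "l \<in> L" for l
  proof -
    have "l \<in> S" using L that by (auto simp: left_ideal_def)
    then show ?thesis
      by (simp add: \<A>_def closedin_image_umult_right[OF closedin_S ultrafilter_of_mem]
          left_ideal_image_umult_right image_umult_right_subset[OF L that])
  qed
  have "\<exists>M\<in>\<A>. \<forall>C\<in>\<A>. C \<subseteq> M \<longrightarrow> C = M"
  proof (rule compact_space_ex_minimal_closed[OF compact_space_beta_topology])
    obtain l where "l \<in> L" using L by (auto simp: left_ideal_def)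
    then show "\<A> \<noteq> {}" using image_in_\<A> by auto
  next
    fix \<C> assume "\<C> \<noteq> {}" "subset.chain \<A> \<C>" "\<Inter>\<C> \<noteq> {}"
    then have \<C>: "\<C> \<subseteq> \<A>" "\<C> \<noteq> {}" "\<Inter>\<C> \<noteq> {}" by (simp_all add: subset_chain_def)
    then obtain C where C: "C \<in> \<C>" by auto
    have "closedin beta_topology (\<Inter>\<C>)" using \<C> by (intro closedin_Inter) (auto simp: \<A>_def)
    moreover have "\<Inter>\<C> \<subseteq> L" "\<Inter>\<C> \<subseteq> S"
    proof -
      have "C \<subseteq> L" "C \<subseteq> S" using C \<C>(1) by (auto simp: \<A>_def left_ideal_def)
      then show "\<Inter>\<C> \<subseteq> L" "\<Inter>\<C> \<subseteq> S" using Inter_lower[OF C] by auto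
    qed
    moreover have "umult p q \<in> \<Inter>\<C>" if "p \<in> S" "q \<in> \<Inter>\<C>" for p q
      using that \<C>(1) by (auto simp: \<A>_def left_ideal_def)
    ultimately show "\<Inter>\<C> \<in> \<A>" using \<C>(3) by (simp add: \<A>_def left_ideal_def)
  qed (simp_all add: \<A>_def left_ideal_def)
  then obtain M where M: "M \<in> \<A>" and min: "\<And>C. C \<in> \<A> \<Longrightarrow> C \<subseteq> M \<Longrightarrow> C = M" by auto
  have "J = M" if J: "left_ideal J" "J \<subseteq> M" for J
  proof -
    obtain j where j: "j \<in> J" using J by (auto simp: left_ideal_def)
    have "j \<in> L" using j J(2) M by (auto simp: \<A>_def)
    have "(\<lambda>p. umult p j) ` S \<subseteq> J" by (rule image_umult_right_subset[OF J(1) j])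
    moreover have "(\<lambda>p. umult p j) ` S = M"
      using min[OF image_in_\<A>[OF \<open>j \<in> L\<close>]] calculation J(2) by simp
    ultimately show ?thesis using J(2) by simp
  qed
  then show ?thesis using M unfolding min_left_ideal_def \<A>_def by blast
qed

lemma min_left_ideal_eq_image:
  assumes L: "min_left_ideal L" and l: "l \<in> L"
  shows "L = (\<lambda>p. umult p l) ` S"
proof -
  have "left_ideal L" using L by (simp add: min_left_ideal_def)
  then have "(\<lambda>p. umult p l) ` S \<subseteq> L" "l \<in> S"
    using image_umult_right_subset l by (auto simp: left_ideal_def)
  then show ?thesis
    using L left_ideal_image_umult_right unfolding min_left_ideal_def by auto
qed

lemma min_left_ideal_closedin:
  assumes L: "min_left_ideal L"
  shows "closedin beta_topology L"
proof -
  obtain l where l: "l \<in> L" "l \<in> S" using min_left_idealD[OF L] by blast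
  show ?thesis
    by (subst min_left_ideal_eq_image[OF L l(1)])
      (rule closedin_image_umult_right[OF closedin_S ultrafilter_of_mem[OF l(2)]])
qed

lemma min_left_ideal_subset_K:
  assumes L: "min_left_ideal L"
  shows "L \<subseteq> K_beta S"
  unfolding K_beta_def
proof (rule Inter_greatest)
  fix I assume "I \<in> {I. ideal_beta S I}"
  then have I: "I \<noteq> {}" "I \<subseteq> S" "\<And>p q. p \<in> S \<Longrightarrow> q \<in> I \<Longrightarrow> umult p q \<in> I \<and> umult q p \<in> I"
    by (auto simp: ideal_beta_def)
  note L_ideal = min_left_idealD[OF L]
  obtain i l where "i \<in> I" "l \<in> L" using I L_ideal by blast
  then have "umult i l \<in> I \<inter> L" using I L_ideal by blast
  then have "left_ideal (I \<inter> L)" using I L_ideal unfolding left_ideal_def by blast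
  then show "L \<subseteq> I" using L unfolding min_left_ideal_def by blast
qed

lemma K_beta_subset: "K_beta S \<subseteq> S"
  unfolding K_beta_def ideal_beta_def using S_nonempty umult_closed by blast

lemma min_left_ideal_image_umult_right:
  assumes L: "min_left_ideal L" and t: "t \<in> S"
  shows "min_left_ideal ((\<lambda>l. umult l t) ` L)"
proof -
  note L_ideal = min_left_idealD[OF L]
  have Lt: "left_ideal ((\<lambda>l. umult l t) ` L)"
    unfolding left_ideal_def using L_ideal t umult_closed by (auto simp: umult_assoc[symmetric])
  have "J = (\<lambda>l. umult l t) ` L" if J: "left_ideal J" "J \<subseteq> (\<lambda>l. umult l t) ` L" for J
  proof -
    obtain l where l: "l \<in> L" "umult l t \<in> J" using J unfolding left_ideal_def by blast
    have "(\<lambda>l. umult l t) ` L = (\<lambda>l. umult l t) ` (\<lambda>p. umult p l) ` S"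
      using min_left_ideal_eq_image[OF L l(1)] by simp
    also have "\<dots> = (\<lambda>p. umult p (umult l t)) ` S" by (simp add: image_image umult_assoc)
    also have "\<dots> \<subseteq> J" using image_umult_right_subset[OF J(1) l(2)] .
    finally show ?thesis using J(2) by blast
  qed
  then show ?thesis using Lt unfolding min_left_ideal_def by blast
qed

lemma K_beta_in_min_left_ideal:
  assumes p: "p \<in> K_beta S"
  shows "\<exists>L. min_left_ideal L \<and> p \<in> L"
proof -
  have "left_ideal S" unfolding left_ideal_def using S_nonempty umult_closed by blast
  then obtain L where L: "min_left_ideal L" using ex_min_left_ideal by blast
  note L_ideal = min_left_idealD[OF L]
  define I where "I = (\<Union>t\<in>S. (\<lambda>l. umult l t) ` L)"
  have "ideal_beta S I"
    unfolding ideal_beta_def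
  proof (intro conjI ballI)
    show "I \<noteq> {}" using L_ideal S_nonempty unfolding I_def by blast
    show "I \<subseteq> S" using L_ideal umult_closed unfolding I_def by blast
  next
    fix q i assume "q \<in> S" "i \<in> I"
    then obtain l t where lt: "l \<in> L" "t \<in> S" "i = umult l t" unfolding I_def by blast
    show "umult q i \<in> I"
      using lt L_ideal(3)[OF \<open>q \<in> S\<close> lt(1)] unfolding I_def by (auto simp: umult_assoc[symmetric])
    show "umult i q \<in> I"
      using lt umult_closed[OF lt(2) \<open>q \<in> S\<close>] unfolding I_def by (auto simp: umult_assoc)
  qed
  then have "p \<in> I" using p unfolding K_beta_def by blast
  then obtain t where "t \<in> S" "p \<in> (\<lambda>l. umult l t) ` L" unfolding I_def by blast
  then show ?thesis using min_left_ideal_image_umult_right[OF L] by blast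
qed

end

section \<open>The closed subsemigroup \<open>Fbar F\<close> and \<open>F\<close>-syndetic sets\<close>

lemma mem_Fbar_iff [simp]: "q \<in> Fbar F \<longleftrightarrow> is_ultrafilter q \<and> F \<subseteq> q"
  by (simp add: Fbar_def betaS_def)

lemma closedin_Fbar:
  assumes "is_filter_on F"
  shows "closedin beta_topology (Fbar F)"
proof -
  have "Fbar F = (\<Inter>G\<in>F. {q \<in> betaS. G \<in> q})" "F \<noteq> {}"
    using assms by (auto simp: Fbar_def is_filter_on_def)
  then show ?thesis by (simp add: closedin_INT beta_basic_clopen(2))
qed

lemma ex_Fbar_superset:
  assumes F: "is_filter_on F" and "\<G> \<noteq> {}"
    and Int: "\<And>A B. A \<in> \<G> \<Longrightarrow> B \<in> \<G> \<Longrightarrow> A \<inter> B \<in> \<G>"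
    and meets: "\<And>G A. G \<in> F \<Longrightarrow> A \<in> \<G> \<Longrightarrow> G \<inter> A \<noteq> {}"
  shows "\<exists>q\<in>Fbar F. \<G> \<subseteq> q"
proof -
  define \<B> where "\<B> = {G \<inter> A |G A. G \<in> F \<and> A \<in> \<G>}"
  have "X \<inter> Y \<in> \<B>" if XY: "X \<in> \<B>" "Y \<in> \<B>" for X Y
  proof -
    obtain G A where "X = G \<inter> A" "G \<in> F" "A \<in> \<G>" using XY(1) unfolding \<B>_def by blast
    moreover obtain G' A' where "Y = G' \<inter> A'" "G' \<in> F" "A' \<in> \<G>" using XY(2) unfolding \<B>_def by blast
    ultimately have "X \<inter> Y = (G \<inter> G') \<inter> (A \<inter> A')" "G \<inter> G' \<in> F" "A \<inter> A' \<in> \<G>"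
      using F Int by (auto simp: is_filter_on_def)
    then show ?thesis unfolding \<B>_def by blast
  qed
  moreover have "{} \<notin> \<B>" using meets unfolding \<B>_def by blast
  ultimately obtain q where q: "is_ultrafilter q" "\<B> \<subseteq> q" using ex_ultrafilter_superset by metis
  obtain A0 where "A0 \<in> \<G>" using \<open>\<G> \<noteq> {}\<close> by blast
  have "F \<subseteq> q"
  proof
    fix G assume "G \<in> F"
    then have "G \<inter> A0 \<in> q" using q(2) \<open>A0 \<in> \<G>\<close> unfolding \<B>_def by blast
    then show "G \<in> q" using ultrafilter_mono[OF q(1)] by blast
  qed
  moreover have "\<G> \<subseteq> q"
  proof
    fix A assume "A \<in> \<G>"
    then have "UNIV \<inter> A \<in> q" using q(2) F unfolding \<B>_def is_filter_on_def by blast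
    then show "A \<in> q" by simp
  qed
  ultimately show ?thesis using q(1) by auto
qed

lemma Fbar_nonempty:
  assumes F: "is_filter_on F"
  shows "Fbar F \<noteq> {}"
proof -
  have "\<exists>q\<in>Fbar F. {UNIV} \<subseteq> q"
    by (rule ex_Fbar_superset[OF F]) (use F in \<open>auto simp: is_filter_on_def\<close>)
  then show ?thesis by blast
qed

lemma F_syndetic_imp_ex_umult_mem:
  assumes F: "is_filter_on F" and syndetic: "F_syndetic F A" and q: "q \<in> Fbar F"
  shows "\<exists>r\<in>Fbar F. A \<in> umult r q"
proof -
  define D where "D = {t. {y. t * y \<in> A} \<in> q}"
  have "G \<inter> D \<noteq> {}" if G: "G \<in> F" for G
  proof -
    obtain H where H: "finite H" "H \<subseteq> G" "(\<Union>t\<in>H. {y. t * y \<in> A}) \<in> F"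
      using syndetic G unfolding F_syndetic_def by blast
    moreover have "is_ultrafilter q" "F \<subseteq> q" using q by auto
    ultimately obtain t where "t \<in> H" "{y. t * y \<in> A} \<in> q"
      using ultrafilter_finite_UN by blast
    then show ?thesis using H(2) unfolding D_def by blast
  qed
  then obtain r where "r \<in> Fbar F" "D \<in> r" using ex_Fbar_superset[OF F, of "{D}"] by auto
  then show ?thesis unfolding D_def umult_def by auto
qed

lemma ex_Fbar_avoiding_if_not_F_syndetic:
  assumes F: "is_filter_on F" and "\<not> F_syndetic F A"
  shows "\<exists>G\<in>F. \<exists>q\<in>Fbar F. \<forall>t\<in>G. {y. t * y \<in> A} \<notin> q"
proof -
  obtain G where G: "G \<in> F"
    and not_syndetic: "\<nexists>H. finite H \<and> H \<subseteq> G \<and> (\<Union>t\<in>H. {y. t * y \<in> A}) \<in> F"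
    using assms(2) unfolding F_syndetic_def by blast
  define \<G> where "\<G> = {- (\<Union>t\<in>H. {y. t * y \<in> A}) |H. finite H \<and> H \<subseteq> G}"
  have "\<exists>q\<in>Fbar F. \<G> \<subseteq> q"
  proof (rule ex_Fbar_superset[OF F])
    show "\<G> \<noteq> {}" unfolding \<G>_def by blast
  next
    fix X Y assume "X \<in> \<G>" "Y \<in> \<G>"
    then obtain H H' where "X = - (\<Union>t\<in>H. {y. t * y \<in> A})" "Y = - (\<Union>t\<in>H'. {y. t * y \<in> A})"
      "finite H" "finite H'" "H \<subseteq> G" "H' \<subseteq> G"
      unfolding \<G>_def by blast
    then have "X \<inter> Y = - (\<Union>t\<in>H \<union> H'. {y. t * y \<in> A})" "finite (H \<union> H')" "H \<union> H' \<subseteq> G"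
      by auto
    then show "X \<inter> Y \<in> \<G>" unfolding \<G>_def by blast
  next
    fix E X assume E: "E \<in> F" and "X \<in> \<G>"
    then obtain H where H: "X = - (\<Union>t\<in>H. {y. t * y \<in> A})" "finite H" "H \<subseteq> G"
      unfolding \<G>_def by blast
    show "E \<inter> X \<noteq> {}"
    proof
      assume "E \<inter> X = {}"
      then have "E \<subseteq> (\<Union>t\<in>H. {y. t * y \<in> A})" using H(1) by blast
      then have "(\<Union>t\<in>H. {y. t * y \<in> A}) \<in> F" using F E by (auto simp: is_filter_on_def)
      then show False using not_syndetic H(2,3) by blast
    qed
  qed
  then obtain q where q: "q \<in> Fbar F" "\<G> \<subseteq> q" by blast
  have "{y. t * y \<in> A} \<notin> q" if "t \<in> G" for t
  proof -
    have "- (\<Union>t\<in>{t}. {y. t * y \<in> A}) \<in> \<G>" using that unfolding \<G>_def by blast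
    then show ?thesis using q ultrafilter_Compl_iff by auto
  qed
  then show ?thesis using G q(1) by blast
qed

lemma F_syndeticI_umult:
  assumes F: "is_filter_on F" and returns: "\<And>q. q \<in> Fbar F \<Longrightarrow> \<exists>r\<in>Fbar F. A \<in> umult r q"
  shows "F_syndetic F A"
proof (rule ccontr)
  assume "\<not> F_syndetic F A"
  then obtain G q where G: "G \<in> F" and q: "q \<in> Fbar F" and avoid: "\<forall>t\<in>G. {y. t * y \<in> A} \<notin> q"
    using ex_Fbar_avoiding_if_not_F_syndetic[OF F] by blast
  obtain r where "r \<in> Fbar F" "A \<in> umult r q" using returns[OF q] by blast
  then have "{t. {y. t * y \<in> A} \<in> q} \<inter> G \<noteq> {}"
    using G ultrafilter_Int_nonempty by (auto simp: umult_def)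
  then show False using avoid by blast
qed

locale Fbar_semigroup =
  fixes F :: "'s::semigroup_mult set set"
  assumes filter: "is_filter_on F" and subsemigroup: "subsemigroup_beta (Fbar F)"

sublocale Fbar_semigroup \<subseteq> closed_subsemigroup "Fbar F"
  using closedin_Fbar Fbar_nonempty by unfold_locales (use filter subsemigroup in auto)

section \<open>Ultrafilter limits in dynamical systems\<close>

lemma nbhd_openin: "openin X V \<Longrightarrow> A \<subseteq> V \<Longrightarrow> nbhd X V A"
  by (auto simp: nbhd_def openin_subset)

lemma nbhdE:
  assumes "nbhd X U A"
  obtains V where "openin X V" "A \<subseteq> V" "V \<subseteq> U"
  using assms unfolding nbhd_def by blast

lemma nbhd_Int:
  assumes "nbhd X U A" "nbhd X V A"
  shows "nbhd X (U \<inter> V) A"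
proof -
  obtain U' V' where "openin X U'" "A \<subseteq> U'" "U' \<subseteq> U" "openin X V'" "A \<subseteq> V'" "V' \<subseteq> V"
    using assms by (meson nbhdE)
  then show ?thesis using assms unfolding nbhd_def by (auto intro!: exI[of _ "U' \<inter> V'"])
qed

lemma Hausdorff_eq_if_mem_closures:
  assumes "Hausdorff_space X" "z \<in> topspace X" "y \<in> topspace X"
    and "\<And>V. openin X V \<Longrightarrow> y \<in> V \<Longrightarrow> z \<in> X closure_of V"
  shows "z = y"
proof (rule ccontr)
  assume "z \<noteq> y"
  then obtain U V where "openin X U" "openin X V" "z \<in> U" "y \<in> V" "disjnt U V"
    using assms(1-3) unfolding Hausdorff_space_def by blast
  then show False using assms(4) unfolding in_closure_of disjnt_def by blast
qed

definition uf_converges :: "'x topology \<Rightarrow> 'a set set \<Rightarrow> ('a \<Rightarrow> 'x) \<Rightarrow> 'x \<Rightarrow> bool" where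
  "uf_converges X p f z \<longleftrightarrow> z \<in> topspace X \<and> (\<forall>V. openin X V \<longrightarrow> z \<in> V \<longrightarrow> {s. f s \<in> V} \<in> p)"

definition uf_limit :: "'x topology \<Rightarrow> 'a set set \<Rightarrow> ('a \<Rightarrow> 'x) \<Rightarrow> 'x" where
  "uf_limit X p f = (THE z. uf_converges X p f z)"

lemma uf_converges_unique:
  assumes "Hausdorff_space X" "is_ultrafilter p" "uf_converges X p f z" "uf_converges X p f z'"
  shows "z = z'"
proof (rule ccontr)
  assume "z \<noteq> z'"
  then obtain V V' where "openin X V" "openin X V'" "z \<in> V" "z' \<in> V'" "disjnt V V'"
    using assms(1,3,4) unfolding Hausdorff_space_def uf_converges_def by metis
  then have "{s. f s \<in> V} \<in> p" "{s. f s \<in> V'} \<in> p" "{s. f s \<in> V} \<inter> {s. f s \<in> V'} = {}"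
    using assms(3,4) unfolding uf_converges_def disjnt_def by auto
  then show False using ultrafilter_Int_nonempty[OF assms(2)] by blast
qed

lemma ex_uf_converges:
  assumes X: "compact_space X" and p: "is_ultrafilter p" and f: "\<And>s. f s \<in> topspace X"
  shows "\<exists>z. uf_converges X p f z"
proof (rule ccontr)
  assume "\<nexists>z. uf_converges X p f z"
  then have cover: "topspace X \<subseteq> \<Union>{V. openin X V \<and> {s. f s \<in> V} \<notin> p}"
    unfolding uf_converges_def by blast
  obtain \<V> where \<V>: "finite \<V>" "\<V> \<subseteq> {V. openin X V \<and> {s. f s \<in> V} \<notin> p}" "topspace X \<subseteq> \<Union>\<V>"
    using compactinD[OF X[unfolded compact_space_def] _ cover] by blast
  have "(\<Union>V\<in>\<V>. {s. f s \<in> V}) = UNIV" using \<V>(3) f by blast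
  then obtain V where "V \<in> \<V>" "{s. f s \<in> V} \<in> p"
    using ultrafilter_finite_UN[OF p \<V>(1)] ultrafilter_UNIV[OF p] by metis
  then show False using \<V>(2) by blast
qed

lemma uf_converges_uf_limit:
  assumes "compact_space X" "Hausdorff_space X" "is_ultrafilter p" "\<And>s. f s \<in> topspace X"
  shows "uf_converges X p f (uf_limit X p f)"
proof -
  obtain z where z: "uf_converges X p f z" using ex_uf_converges assms(1,3,4) by blast
  then show ?thesis
    unfolding uf_limit_def by (rule theI) (use z uf_converges_unique[OF assms(2,3)] in blast)
qed

locale dynamics =
  fixes X :: "'x topology" and T :: "'s::semigroup_mult \<Rightarrow> 'x \<Rightarrow> 'x"
  assumes dyn_system: "dyn_system X T"
begin

lemma compact_X: "compact_space X"
  and Hausdorff_X: "Hausdorff_space X"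
  and continuous_map_T: "continuous_map X X (T s)"
  and T_mult: "x \<in> topspace X \<Longrightarrow> T s (T t x) = T (s * t) x"
  using dyn_system unfolding dyn_system_def by blast+

lemma T_in_topspace: "x \<in> topspace X \<Longrightarrow> T s x \<in> topspace X"
  using continuous_map_T by (auto simp: continuous_map_def)

lemma closed_nbhd_base:
  assumes "openin X W" "z \<in> W"
  obtains U V where "openin X U" "closedin X V" "z \<in> U" "U \<subseteq> V" "V \<subseteq> W"
  using assms compact_Hausdorff_imp_regular_space[OF compact_X Hausdorff_X]
  unfolding neighbourhood_base_of_closedin[symmetric] neighbourhood_base_of by metis

definition act :: "'s set set \<Rightarrow> 'x \<Rightarrow> 'x" where
  "act p x = uf_limit X p (\<lambda>s. T s x)"

lemma uf_converges_act:
  "is_ultrafilter p \<Longrightarrow> x \<in> topspace X \<Longrightarrow> uf_converges X p (\<lambda>s. T s x) (act p x)"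
  unfolding act_def by (intro uf_converges_uf_limit compact_X Hausdorff_X T_in_topspace)

lemma act_in_topspace: "is_ultrafilter p \<Longrightarrow> x \<in> topspace X \<Longrightarrow> act p x \<in> topspace X"
  using uf_converges_act by (simp add: uf_converges_def)

lemma act_openin:
  "is_ultrafilter p \<Longrightarrow> x \<in> topspace X \<Longrightarrow> openin X V \<Longrightarrow> act p x \<in> V \<Longrightarrow> {s. T s x \<in> V} \<in> p"
  using uf_converges_act by (simp add: uf_converges_def)

lemma act_eqI:
  "is_ultrafilter p \<Longrightarrow> x \<in> topspace X \<Longrightarrow> uf_converges X p (\<lambda>s. T s x) z \<Longrightarrow> act p x = z"
  using uf_converges_act uf_converges_unique[OF Hausdorff_X] by blast

lemma act_mem_closedin:
  assumes p: "is_ultrafilter p" and x: "x \<in> topspace X"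
    and "closedin X V" and V: "{s. T s x \<in> V} \<in> p"
  shows "act p x \<in> V"
proof (rule ccontr)
  assume "act p x \<notin> V"
  then have "act p x \<in> topspace X - V" using act_in_topspace[OF p x] by blast
  moreover have "openin X (topspace X - V)" using \<open>closedin X V\<close> by (simp add: closedin_def)
  ultimately have "{s. T s x \<in> topspace X - V} \<in> p" using act_openin[OF p x] by blast
  then show False using ultrafilter_Int_nonempty[OF p V] by blast
qed

lemma act_umult:
  assumes p: "is_ultrafilter p" and q: "is_ultrafilter q" and x: "x \<in> topspace X"
  shows "act p (act q x) = act (umult p q) x"
proof (rule sym, rule act_eqI[OF ultrafilter_umult[OF p q] x])
  let ?z = "act q x"
  have z: "?z \<in> topspace X" using act_in_topspace[OF q x] .
  show "uf_converges X (umult p q) (\<lambda>s. T s x) (act p ?z)"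
    unfolding uf_converges_def
  proof (intro conjI allI impI)
    show "act p ?z \<in> topspace X" using act_in_topspace[OF p z] .
    fix V assume V: "openin X V" "act p ?z \<in> V"
    have "{s. {t. s * t \<in> {u. T u x \<in> V}} \<in> q} \<supseteq> {s. T s ?z \<in> V}"
    proof
      fix s assume "s \<in> {s. T s ?z \<in> V}"
      then have "{t. T t x \<in> {a \<in> topspace X. T s a \<in> V}} \<in> q"
        using act_openin[OF q x openin_continuous_map_preimage[OF continuous_map_T V(1)]] z by simp
      moreover have "{t. T t x \<in> {a \<in> topspace X. T s a \<in> V}} \<subseteq> {t. s * t \<in> {u. T u x \<in> V}}"
        using T_mult[OF x] by auto
      ultimately show "s \<in> {s. {t. s * t \<in> {u. T u x \<in> V}} \<in> q}"
        using ultrafilter_mono[OF q] by blast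
    qed
    moreover have "{s. T s ?z \<in> V} \<in> p" using act_openin[OF p z V] .
    ultimately show "{s. T s x \<in> V} \<in> umult p q"
      unfolding umult_def using ultrafilter_mono[OF p] by blast
  qed
qed

lemma continuous_map_act:
  assumes x: "x \<in> topspace X"
  shows "continuous_map beta_topology X (\<lambda>q. act q x)"
  unfolding continuous_map_def
proof (intro conjI allI impI)
  show "(\<lambda>q. act q x) \<in> topspace beta_topology \<rightarrow> topspace X"
    using act_in_topspace[OF _ x] by (simp add: betaS_def)
  fix W assume W: "openin X W"
  show "openin beta_topology {q \<in> topspace beta_topology. act q x \<in> W}"
  proof (subst openin_subopen, intro ballI)
    fix q assume "q \<in> {q \<in> topspace beta_topology. act q x \<in> W}"
    then have q: "is_ultrafilter q" "act q x \<in> W" by (simp_all add: betaS_def)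
    obtain U V where UV: "openin X U" "closedin X V" "act q x \<in> U" "U \<subseteq> V" "V \<subseteq> W"
      using closed_nbhd_base[OF W q(2)] .
    let ?A = "{s. T s x \<in> U}"
    have "{q' \<in> betaS. ?A \<in> q'} \<subseteq> {q \<in> topspace beta_topology. act q x \<in> W}"
    proof
      fix q' assume "q' \<in> {q' \<in> betaS. ?A \<in> q'}"
      then have q': "is_ultrafilter q'" "q' \<in> betaS" "{s. T s x \<in> V} \<in> q'"
        using UV(4) by (auto simp: betaS_def intro: ultrafilter_mono)
      then show "q' \<in> {q \<in> topspace beta_topology. act q x \<in> W}"
        using act_mem_closedin[OF q'(1) x UV(2) q'(3)] UV(5) by auto
    qed
    moreover have "q \<in> {q' \<in> betaS. ?A \<in> q'}"
      using q act_openin[OF q(1) x UV(1,3)] by (simp add: betaS_def)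
    ultimately show "\<exists>N. openin beta_topology N \<and> q \<in> N
                        \<and> N \<subseteq> {q \<in> topspace beta_topology. act q x \<in> W}"
      using beta_basic_clopen(1) by blast
  qed
qed

lemma ex_fixing_if_returns:
  assumes y: "y \<in> topspace X" and L: "closedin beta_topology L"
    and returns: "\<And>V. openin X V \<Longrightarrow> y \<in> V \<Longrightarrow> \<exists>q\<in>L. {s. T s y \<in> V} \<in> q"
  shows "\<exists>q\<in>L. act q y = y"
proof -
  have L_uf: "is_ultrafilter q" if "q \<in> L" for q
    using closedin_subset[OF L] that by (auto simp: betaS_def)
  define C where "C V = {q \<in> L. act q y \<in> X closure_of V}" for V
  let ?\<V> = "{V. openin X V \<and> y \<in> V}"
  have "\<Inter>(C ` ?\<V>) \<noteq> {}"
  proof -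
    have "closedin beta_topology (C V)" for V
      unfolding C_def
      by (rule closedin_continuous_map_preimage_gen[OF continuous_map_act[OF y] L closedin_closure_of])
    moreover have "\<Inter>\<F> \<noteq> {}" if \<F>: "finite \<F>" "\<F> \<subseteq> C ` ?\<V>" for \<F>
    proof -
      obtain \<W> where \<W>: "\<W> \<subseteq> ?\<V>" "finite \<W>" "\<F> = C ` \<W>"
        using \<F> by (meson finite_subset_image)
      define V0 where "V0 = (\<Inter>V\<in>\<W>. V) \<inter> topspace X"
      have "openin X V0" unfolding V0_def using \<W> openin_INT[of \<W> X "\<lambda>V. V"] by auto
      moreover have "y \<in> V0" unfolding V0_def using \<W>(1) y by blast
      ultimately obtain q where q: "q \<in> L" "{s. T s y \<in> V0} \<in> q" using returns by blast
      have "{s. T s y \<in> X closure_of V0} \<in> q"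
        by (rule ultrafilter_mono[OF L_uf[OF q(1)] q(2)])
          (use closure_of_subset[of V0 X] in \<open>auto simp: V0_def\<close>)
      then have "act q y \<in> X closure_of V0"
        by (rule act_mem_closedin[OF L_uf[OF q(1)] y closedin_closure_of])
      then have "q \<in> C V" if "V \<in> \<W>" for V
        using q(1) that closure_of_mono[of V0 V X] unfolding C_def V0_def by blast
      then show ?thesis using \<W>(3) by blast
    qed
    ultimately show ?thesis
      using compact_space_beta_topology unfolding compact_space_fip
      by (elim allE impE) (intro conjI; blast)
  qed
  then obtain q where q_in: "\<And>V. openin X V \<Longrightarrow> y \<in> V \<Longrightarrow> q \<in> C V" by blast
  then have "q \<in> L" using openin_topspace y by (auto simp: C_def)
  moreover have "act q y = y"
    using q_in act_in_topspace[OF L_uf[OF \<open>q \<in> L\<close>] y]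
    by (intro Hausdorff_eq_if_mem_closures[OF Hausdorff_X _ y]) (auto simp: C_def)
  ultimately show ?thesis by blast
qed

lemma act_eq_if_diagonal_returns:
  assumes r: "is_ultrafilter r" and x: "x \<in> topspace X" and y: "y \<in> topspace X"
    and returns: "\<And>W. nbhd (prod_topology X X) W {(z, z) |z. z \<in> topspace X}
                   \<Longrightarrow> {s. (T s x, T s y) \<in> W} \<in> r"
  shows "act r x = act r y"
proof (rule ccontr)
  define \<Delta> where "\<Delta> = {(z, z) |z. z \<in> topspace X}"
  assume "act r x \<noteq> act r y"
  then have "(act r x, act r y) \<in> topspace (prod_topology X X) - \<Delta>"
    using act_in_topspace[OF r] x y by (auto simp: \<Delta>_def)
  moreover have "closedin (prod_topology X X) \<Delta>"
    using Hausdorff_X unfolding Hausdorff_space_closedin_diagonal \<Delta>_def by (simp add: setcompr_eq_image)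
  moreover have "regular_space (prod_topology X X)"
    using compact_Hausdorff_imp_regular_space[OF compact_X Hausdorff_X]
    by (simp add: regular_space_prod_topology)
  ultimately obtain N where N: "openin (prod_topology X X) N" "(act r x, act r y) \<in> N"
      "disjnt \<Delta> (prod_topology X X closure_of N)"
    unfolding regular_space by blast
  then obtain N1 N2 where N12: "openin X N1" "openin X N2" "act r x \<in> N1" "act r y \<in> N2" "N1 \<times> N2 \<subseteq> N"
    unfolding openin_prod_topology_alt by meson
  define W where "W = topspace (prod_topology X X) - prod_topology X X closure_of N"
  have "openin (prod_topology X X) W"
    unfolding W_def by (rule openin_diff[OF openin_topspace closedin_closure_of])
  moreover have "\<Delta> \<subseteq> W" using N(3) unfolding W_def disjnt_def by (auto simp: \<Delta>_def)
  ultimately have "{s. (T s x, T s y) \<in> W} \<in> r" using returns nbhd_openin unfolding \<Delta>_def by blast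
  moreover have "{s. T s x \<in> N1} \<inter> {s. T s y \<in> N2} \<in> r"
    using act_openin[OF r x N12(1,3)] act_openin[OF r y N12(2,4)] by (rule ultrafilter_Int[OF r])
  moreover have "N \<subseteq> prod_topology X X closure_of N"
    using openin_subset[OF N(1)] by (rule closure_of_subset)
  then have "{s. (T s x, T s y) \<in> W} \<inter> ({s. T s x \<in> N1} \<inter> {s. T s y \<in> N2}) = {}"
    using N12(5) unfolding W_def by blast
  ultimately show False using ultrafilter_Int_nonempty[OF r] by blast
qed

lemma F_proximal_imp_ex_act_eq:
  assumes F: "is_filter_on F" and x: "x \<in> topspace X" and y: "y \<in> topspace X"
    and proximal: "F_proximal F X T x y"
  shows "\<exists>r\<in>Fbar F. act r x = act r y"
proof -
  define \<Delta> where "\<Delta> = {(z, z) |z. z \<in> topspace X}"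
  let ?\<G> = "{{s. (T s x, T s y) \<in> W} |W. nbhd (prod_topology X X) W \<Delta>}"
  have "\<exists>r\<in>Fbar F. ?\<G> \<subseteq> r"
  proof (rule ex_Fbar_superset[OF F])
    have "openin (prod_topology X X) (topspace X \<times> topspace X)"
      using openin_topspace[of "prod_topology X X"] by (simp add: topspace_prod_topology)
    then have "nbhd (prod_topology X X) (topspace X \<times> topspace X) \<Delta>"
      by (rule nbhd_openin) (auto simp: \<Delta>_def)
    then show "?\<G> \<noteq> {}" by blast
  next
    fix A B assume "A \<in> ?\<G>" "B \<in> ?\<G>"
    then obtain W W' where "A = {s. (T s x, T s y) \<in> W}" "B = {s. (T s x, T s y) \<in> W'}"
      "nbhd (prod_topology X X) W \<Delta>" "nbhd (prod_topology X X) W' \<Delta>" by blast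
    then have "A \<inter> B = {s. (T s x, T s y) \<in> W \<inter> W'}" "nbhd (prod_topology X X) (W \<inter> W') \<Delta>"
      by (auto intro: nbhd_Int)
    then show "A \<inter> B \<in> ?\<G>" by blast
  next
    fix G A assume "G \<in> F" "A \<in> ?\<G>"
    then show "G \<inter> A \<noteq> {}" using proximal unfolding F_proximal_def \<Delta>_def by blast
  qed
  then obtain r where r: "r \<in> Fbar F" "?\<G> \<subseteq> r" by blast
  have "act r x = act r y"
    by (rule act_eq_if_diagonal_returns[OF _ x y]) (use r in \<open>auto simp: \<Delta>_def\<close>)
  then show ?thesis using r(1) by blast
qed

lemma F_proximal_if_act_eq:
  assumes x: "x \<in> topspace X" and y: "y \<in> topspace X"
    and r: "r \<in> Fbar F" and eq: "act r x = act r y"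
  shows "F_proximal F X T x y"
  unfolding F_proximal_def
proof (intro allI impI ballI)
  have r_uf: "is_ultrafilter r" and F_r: "F \<subseteq> r" using r by simp_all
  fix W G assume W: "nbhd (prod_topology X X) W {(z, z) |z. z \<in> topspace X}" and G: "G \<in> F"
  obtain W' where W': "openin (prod_topology X X) W'" "{(z, z) |z. z \<in> topspace X} \<subseteq> W'" "W' \<subseteq> W"
    using W by (rule nbhdE)
  have "(act r y, act r y) \<in> W'" using W'(2) act_in_topspace[OF r_uf y] by blast
  then obtain V1 V2 where V: "openin X V1" "openin X V2" "act r x \<in> V1" "act r y \<in> V2" "V1 \<times> V2 \<subseteq> W'"
    using W'(1) eq unfolding openin_prod_topology_alt by metis
  have "{s. T s x \<in> V1} \<in> r" "{s. T s y \<in> V2} \<in> r"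
    using act_openin[OF r_uf x V(1,3)] act_openin[OF r_uf y V(2,4)] .
  then have "{s. T s x \<in> V1} \<inter> {s. T s y \<in> V2} \<inter> G \<in> r"
    using G F_r by (intro ultrafilter_Int[OF r_uf]) auto
  then obtain s where "s \<in> G" "T s x \<in> V1" "T s y \<in> V2"
    using ultrafilter_Int_nonempty[OF r_uf] by blast
  then show "\<exists>s\<in>G. (T s x, T s y) \<in> W" using V(5) W'(3) by blast
qed

end

section \<open>\<open>F\<close>-central sets\<close>

locale Fbar_dynamics = Fbar_semigroup F + dynamics X T
  for F :: "'s::semigroup_mult set set" and X :: "'x topology" and T :: "'s \<Rightarrow> 'x \<Rightarrow> 'x"
begin

lemma F_unif_rec_if_K_beta:
  assumes p: "p \<in> K_beta (Fbar F)" and y: "y \<in> topspace X" and py: "act p y = y"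
  shows "F_unif_rec F X T y"
  unfolding F_unif_rec_def
proof (intro allI impI)
  fix U assume "nbhd X U {y}"
  then obtain V where V: "openin X V" "y \<in> V" "V \<subseteq> U" by (rule nbhdE) blast
  show "F_syndetic F {s. T s y \<in> U}"
  proof (rule F_syndeticI_umult[OF filter])
    fix q assume q: "q \<in> Fbar F"
    obtain L where L: "min_left_ideal L" "p \<in> L" using K_beta_in_min_left_ideal[OF p] by blast
    have "umult q p \<in> L" using min_left_idealD(3)[OF L(1)] q L(2) by blast
    then have "p \<in> (\<lambda>r. umult r (umult q p)) ` Fbar F"
      using min_left_ideal_eq_image[OF L(1)] L(2) by blast
    then obtain r where r: "r \<in> Fbar F" "p = umult r (umult q p)" by auto
    have uf: "is_ultrafilter r" "is_ultrafilter q" "is_ultrafilter p"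
      using r q K_beta_subset p by auto
    have "act (umult r q) y = act (umult r (umult q p)) y"
      using act_umult[OF ultrafilter_umult[OF uf(1,2)] uf(3) y] py by (simp add: umult_assoc)
    also have "\<dots> = y" using r(2) py by simp
    finally have "{s. T s y \<in> V} \<in> umult r q"
      using act_openin[OF ultrafilter_umult[OF uf(1,2)] y V(1)] V(2) by simp
    then have "{s. T s y \<in> U} \<in> umult r q"
      by (rule ultrafilter_mono[OF ultrafilter_umult[OF uf(1,2)]]) (use V(3) in auto)
    then show "\<exists>r\<in>Fbar F. {s. T s y \<in> U} \<in> umult r q" using r(1) by blast
  qed
qed

lemma F_unif_rec_returns_in_min_left_ideal:
  assumes rec: "F_unif_rec F X T y" and L: "min_left_ideal L" and V: "openin X V" "y \<in> V"
  shows "\<exists>q\<in>L. {s. T s y \<in> V} \<in> q"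
proof -
  have "F_syndetic F {s. T s y \<in> V}"
    using rec nbhd_openin[OF V(1)] V(2) unfolding F_unif_rec_def by blast
  moreover obtain l where "l \<in> L" using min_left_idealD(1)[OF L] by blast
  ultimately obtain r where "r \<in> Fbar F" "{s. T s y \<in> V} \<in> umult r l"
    using F_syndetic_imp_ex_umult_mem[OF filter] min_left_idealD(2)[OF L] by blast
  moreover have "umult r l \<in> L" using min_left_idealD(3)[OF L] \<open>l \<in> L\<close> \<open>r \<in> Fbar F\<close> by blast
  ultimately show ?thesis by blast
qed

lemma ex_idempotent_fixing_in_min_left_ideal:
  assumes y: "y \<in> topspace X" and rec: "F_unif_rec F X T y" and L: "min_left_ideal L"
  shows "\<exists>u\<in>L. umult u u = u \<and> act u y = y"
proof -
  have L_Fbar: "L \<subseteq> Fbar F" by (rule min_left_idealD(2)[OF L])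
  define C where "C = {q \<in> L. act q y \<in> {y}}"
  have "closedin beta_topology C"
    unfolding C_def
    by (rule closedin_continuous_map_preimage_gen[OF continuous_map_act[OF y]
          min_left_ideal_closedin[OF L] closedin_Hausdorff_singleton[OF Hausdorff_X y]])
  moreover have "C \<noteq> {}"
    using ex_fixing_if_returns[OF y min_left_ideal_closedin[OF L]]
      F_unif_rec_returns_in_min_left_ideal[OF rec L] unfolding C_def by blast
  moreover have "umult p q \<in> C" if "p \<in> C" "q \<in> C" for p q
  proof -
    have pq: "p \<in> L" "q \<in> L" "act p y = y" "act q y = y" using that by (auto simp: C_def)
    then have "is_ultrafilter p" "is_ultrafilter q" using L_Fbar by auto
    then have "act (umult p q) y = y" using act_umult[OF _ _ y] pq(3,4) by metis
    moreover have "umult p q \<in> L" using min_left_idealD(3)[OF L] pq(1,2) L_Fbar by blast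
    ultimately show ?thesis by (simp add: C_def)
  qed
  ultimately have "closed_subsemigroup C" unfolding closed_subsemigroup_iff by blast
  then obtain u where "u \<in> C" "umult u u = u" using closed_subsemigroup.ex_idempotent by blast
  then show ?thesis unfolding C_def by blast
qed

lemma F_central_if_proximal_unif_rec:
  assumes x: "x \<in> topspace X" and y: "y \<in> topspace X" and U: "nbhd X U {y}"
    and proximal: "F_proximal F X T x y" and rec: "F_unif_rec F X T y"
  shows "F_central F {s. T s x \<in> U}"
proof -
  obtain r where r: "r \<in> Fbar F" "act r x = act r y"
    using F_proximal_imp_ex_act_eq[OF filter x y proximal] by blast
  obtain L where L: "min_left_ideal L" "L \<subseteq> (\<lambda>p. umult p r) ` Fbar F"
    using ex_min_left_ideal[OF left_ideal_image_umult_right[OF r(1)]] by blast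
  obtain u where u: "u \<in> L" "umult u u = u" "act u y = y"
    using ex_idempotent_fixing_in_min_left_ideal[OF y rec L(1)] by blast
  obtain v where v: "v \<in> Fbar F" "u = umult v r" using L(2) u(1) by blast
  have uf: "is_ultrafilter v" "is_ultrafilter r" "is_ultrafilter u"
    using v r ultrafilter_umult by auto
  have "act u x = act v (act r y)" using act_umult[OF uf(1,2) x] v(2) r(2) by simp
  also have "\<dots> = y" using act_umult[OF uf(1,2) y] v(2) u(3) by simp
  finally have ux: "act u x = y" .
  obtain V where V: "openin X V" "{y} \<subseteq> V" "V \<subseteq> U" using U by (rule nbhdE)
  have "{s. T s x \<in> V} \<in> u" using act_openin[OF uf(3) x V(1)] V(2) ux by simp
  then have "{s. T s x \<in> U} \<in> u" by (rule ultrafilter_mono[OF uf(3)]) (use V(3) in auto)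
  moreover have "u \<in> K_beta (Fbar F)" using min_left_ideal_subset_K[OF L(1)] u(1) by blast
  ultimately show ?thesis unfolding F_central_def using u(2) by blast
qed

end

text \<open>The shift on \<open>{0,1}\<^bsup>S \<union> {e}\<^esup>\<close>, with points encoded as set families: coordinate \<open>{t}\<close>
  of \<open>shift s \<A>\<close> is coordinate \<open>{t * s}\<close> of \<open>\<A>\<close>, and the empty set stands for the
  adjoined identity \<open>e\<close>, so that coordinate \<open>{}\<close> of \<open>shift s \<A>\<close> is coordinate \<open>{s}\<close> of \<open>\<A>\<close>.\<close>

definition shift_coord :: "'s::semigroup_mult \<Rightarrow> 's set \<Rightarrow> 's set" where
  "shift_coord s A = (if A = {} then {s} else (\<lambda>a. a * s) ` A)"

definition shift :: "'s::semigroup_mult \<Rightarrow> 's set set \<Rightarrow> 's set set" where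
  "shift s \<A> = shift_coord s -` \<A>"

lemma shift_coord_shift_coord: "shift_coord t (shift_coord s A) = shift_coord (s * t) A"
  by (auto simp: shift_coord_def image_image mult.assoc)

lemma empty_mem_shift_iff: "{} \<in> shift s \<A> \<longleftrightarrow> {s} \<in> \<A>"
  by (simp add: shift_def shift_coord_def)

lemma dyn_system_shift: "dyn_system membership_topology shift"
  unfolding dyn_system_def
proof (intro conjI allI ballI compact_space_membership_topology Hausdorff_space_membership_topology)
  show "continuous_map membership_topology membership_topology (shift s)" for s
    by (simp add: continuous_map_into_membership_topology_iff shift_def continuous_map_membership)
  show "shift s (shift t \<A>) = shift (s * t) \<A>" for s t \<A>
    by (simp add: shift_def vimage_comp o_def shift_coord_shift_coord)
qed

context Fbar_semigroup
begin

lemma F_central_imp_dynamics: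
  assumes "F_central F B"
  shows "\<exists>(X :: 's set set topology) T x y U.
           dyn_system X T \<and> x \<in> topspace X \<and> y \<in> topspace X \<and> nbhd X U {y}
           \<and> F_proximal F X T x y \<and> F_unif_rec F X T y \<and> B = {s. T s x \<in> U}"
proof -
  interpret Fbar_dynamics F membership_topology shift
    by unfold_locales (rule dyn_system_shift)
  obtain p where p: "p \<in> K_beta (Fbar F)" "umult p p = p" "B \<in> p"
    using assms unfolding F_central_def by blast
  then have p_uf: "is_ultrafilter p" using K_beta_subset by auto
  define x where "x = (\<lambda>b. {b}) ` B"
  define U :: "'s set set set" where "U = {\<A>. {} \<in> \<A>}"
  define y where "y = act p x"
  have B: "B = {s. shift s x \<in> U}" by (auto simp: U_def x_def empty_mem_shift_iff)
  have "act p y = y" unfolding y_def using act_umult[OF p_uf p_uf] p(2) by simp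
  moreover have "y \<in> U"
    unfolding y_def using act_mem_closedin[OF p_uf _ membership_clopen(2)] p(3) B by (simp add: U_def)
  then have "nbhd membership_topology U {y}"
    using membership_clopen(1)[of "\<lambda>b. b" "{}"] by (intro nbhd_openin) (simp_all add: U_def)
  moreover have "F_proximal F membership_topology shift x y"
    using F_proximal_if_act_eq[of x y p] p(1) K_beta_subset calculation(1) unfolding y_def by auto
  moreover have "F_unif_rec F membership_topology shift y"
    using F_unif_rec_if_K_beta[OF p(1)] calculation(1) by simp
  ultimately show ?thesis
    using dyn_system_shift B
    by (intro exI[of _ membership_topology] exI[of _ shift] exI[of _ x] exI[of _ y] exI[of _ U]) simp
qed

lemma F_central_if_dynamics:
  assumes "dyn_system X T" "x \<in> topspace X" "y \<in> topspace X" "nbhd X U {y}"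
    and "F_proximal F X T x y" "F_unif_rec F X T y"
  shows "F_central F {s. T s x \<in> U}"
proof -
  interpret Fbar_dynamics F X T by unfold_locales (rule assms(1))
  show ?thesis using F_central_if_proximal_unif_rec assms(2-) .
qed

end

theorem theorem5:
  fixes F :: "'s::semigroup_mult set set" and B :: "'s set"
  assumes "is_filter_on F" and "subsemigroup_beta (Fbar F)"
  shows "(F_central F B \<longrightarrow>
           (\<exists>(X :: 's set set topology) T x y U.
              dyn_system X T \<and> x \<in> topspace X \<and> y \<in> topspace X \<and> nbhd X U {y}
              \<and> F_proximal F X T x y \<and> F_unif_rec F X T y \<and> B = {s. T s x \<in> U}))
       \<and> (\<forall>(X :: 'x topology) T x y U.
              dyn_system X T \<and> x \<in> topspace X \<and> y \<in> topspace X \<and> nbhd X U {y}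
              \<and> F_proximal F X T x y \<and> F_unif_rec F X T y \<and> B = {s. T s x \<in> U}
              \<longrightarrow> F_central F B)"
proof -
  interpret Fbar_semigroup F using assms by unfold_locales
  show ?thesis by (intro conjI impI allI F_central_imp_dynamics) (auto intro: F_central_if_dynamics)
qed

end
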